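(* Let $S>0$, $\zeta\in\{0,1\}$, $\phi\in(-1,1)$, and let $(u_n)_{n\in\mathbb{N}}$ be the $\phi$-market impact scenario defined below. Then there exists $R>0$ such that for all $x\in(-R,R)$ the scenario starting from $x$ is regular, i.e. $N(x)=+\infty$, where $N(x):=\inf\{n\in\mathbb{N}: s_n(x)=-S\}$ with $\inf\emptyset=+\infty$.
   Context: Fix $S>0$, $\zeta\in\{0,1\}$ and $\phi\in\mathbb{R}$. For $a,b\in\mathbb{R}$ write $a\vee b=\max(a,b)$. The $\phi$-market impact scenario starting from $x\in\mathbb{R}$ is the sequence of real-valued functions $(u_n)_{n\in\mathbb{N}}$ defined by $u_0(x)=x\vee(-S)$ and, for all $n\in\mathbb{N}$, $u_{n+1}(x)=\Big(\phi\big(1+\tfrac{s_n(x)}{S}\big)^{1+\zeta}u_n(x)\Big)\vee\big(-s_n(x)-S\big)$, where $s_n(x)=\sum_{k=0}^n u_k(x)$. *)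

theory Defs
  imports Complex_Main
begin

fun mis_us :: "real \<Rightarrow> nat \<Rightarrow> real \<Rightarrow> real \<Rightarrow> nat \<Rightarrow> real \<times> real" where
  "mis_us S \<zeta> \<phi> x 0 = (max x (-S), max x (-S))"
| "mis_us S \<zeta> \<phi> x (Suc n) =
     (let (u, s) = mis_us S \<zeta> \<phi> x n;
          u' = max (\<phi> * (1 + s / S) ^ (1 + \<zeta>) * u) (- s - S)
      in (u', s + u'))"

definition mis_u :: "real \<Rightarrow> nat \<Rightarrow> real \<Rightarrow> real \<Rightarrow> nat \<Rightarrow> real" where
  "mis_u S \<zeta> \<phi> x n = fst (mis_us S \<zeta> \<phi> x n)"

definition mis_s :: "real \<Rightarrow> nat \<Rightarrow> real \<Rightarrow> real \<Rightarrow> nat \<Rightarrow> real" where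
  "mis_s S \<zeta> \<phi> x n = (\<Sum>k\<le>n. mis_u S \<zeta> \<phi> x k)"

definition regular_scenario :: "real \<Rightarrow> nat \<Rightarrow> real \<Rightarrow> real \<Rightarrow> bool" where
  "regular_scenario S \<zeta> \<phi> x \<longleftrightarrow> {n. mis_s S \<zeta> \<phi> x n = - S} = {}"

end

theory Submission
  imports Defs
begin

text \<open>Choose \<open>0 < \<delta> \<le> 1/2\<close> with \<open>q = |\<phi>| (1 + \<delta>)^(1 + \<zeta>) < 1\<close>. While \<open>|s_n| < \<delta> S\<close>, the
  impact factor \<open>\<phi> (1 + s_n/S)^(1 + \<zeta>)\<close> has modulus at most \<open>q\<close> and the floor \<open>-s_n - S\<close> is
  inactive, so the quantity \<open>(1 - q) |s_n| + q |u_n|\<close> cannot increase. Starting from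
  \<open>|x| < \<delta> S (1 - q)\<close> it therefore keeps \<open>|s_n| < \<delta> S < S\<close> forever, so \<open>s_n = -S\<close> never occurs.\<close>

lemma mis_us_eq: "mis_us S \<zeta> \<phi> x n = (mis_u S \<zeta> \<phi> x n, mis_s S \<zeta> \<phi> x n)"
  by (induction n) (auto simp: mis_s_def mis_u_def Let_def split: prod.splits)

lemma mis_s_0: "mis_s S \<zeta> \<phi> x 0 = max x (-S)"
  by (simp add: mis_s_def mis_u_def)

lemma mis_u_Suc:
  "mis_u S \<zeta> \<phi> x (Suc n) =
     max (\<phi> * (1 + mis_s S \<zeta> \<phi> x n / S) ^ (1 + \<zeta>) * mis_u S \<zeta> \<phi> x n) (- mis_s S \<zeta> \<phi> x n - S)"
  by (subst mis_u_def) (simp add: Let_def mis_us_eq[of S \<zeta> \<phi> x n])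

lemma mis_s_Suc: "mis_s S \<zeta> \<phi> x (Suc n) = mis_s S \<zeta> \<phi> x n + mis_u S \<zeta> \<phi> x (Suc n)"
  by (simp add: mis_s_def)

lemma abs_impact_factor_le:
  fixes S \<delta> s \<phi> :: real
  assumes "S > 0" "\<delta> \<le> 1" "\<bar>s\<bar> < \<delta> * S"
  shows "\<bar>\<phi> * (1 + s / S) ^ k\<bar> \<le> \<bar>\<phi>\<bar> * (1 + \<delta>) ^ k"
proof -
  have "\<bar>s / S\<bar> < \<delta>"
    using assms by (simp add: abs_divide pos_divide_less_eq)
  then have "0 \<le> 1 + s / S" "1 + s / S \<le> 1 + \<delta>"
    using assms(2) by linarith+
  then have "\<bar>(1 + s / S) ^ k\<bar> \<le> (1 + \<delta>) ^ k"
    by (simp add: power_mono)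
  then show ?thesis
    unfolding abs_mult[of \<phi>] by (rule mult_left_mono) simp
qed

lemma impact_invariant_bounds:
  fixes S \<delta> q x s u :: real
  assumes "S > 0" "0 < \<delta>" "0 \<le> q" "q < 1"
    and x: "\<bar>x\<bar> < \<delta> * S * (1 - q)"
    and inv: "(1 - q) * \<bar>s\<bar> + q * \<bar>u\<bar> \<le> \<bar>x\<bar>"
  shows "\<bar>s\<bar> < \<delta> * S" and "q * \<bar>u\<bar> < \<delta> * S"
proof -
  have "0 \<le> q * \<bar>u\<bar>" "0 \<le> (1 - q) * \<bar>s\<bar>"
    using assms(3,4) by simp_all
  moreover have "\<delta> * S * (1 - q) \<le> \<delta> * S"
    using assms(1-4) by (intro mult_left_le) auto
  moreover have "\<delta> * S * (1 - q) = (1 - q) * (\<delta> * S)"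
    by (rule mult.commute)
  ultimately have "(1 - q) * \<bar>s\<bar> < (1 - q) * (\<delta> * S)" and "q * \<bar>u\<bar> < \<delta> * S"
    using x inv by linarith+
  then show "\<bar>s\<bar> < \<delta> * S" and "q * \<bar>u\<bar> < \<delta> * S"
    using assms(4) by simp_all
qed

lemma impact_step_invariant:
  fixes S \<delta> q \<phi> x s u :: real
  assumes "S > 0" "0 < \<delta>" "\<delta> \<le> 1/2" "0 \<le> q" "q < 1"
    and q: "\<bar>\<phi>\<bar> * (1 + \<delta>) ^ (1 + \<zeta>) \<le> q"
    and x: "\<bar>x\<bar> < \<delta> * S * (1 - q)"
    and inv: "(1 - q) * \<bar>s\<bar> + q * \<bar>u\<bar> \<le> \<bar>x\<bar>"
  shows "(1 - q) * \<bar>s + max (\<phi> * (1 + s / S) ^ (1 + \<zeta>) * u) (- s - S)\<bar>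
           + q * \<bar>max (\<phi> * (1 + s / S) ^ (1 + \<zeta>) * u) (- s - S)\<bar> \<le> \<bar>x\<bar>"
proof -
  note s_small = impact_invariant_bounds(1)[OF assms(1,2,4,5) x inv]
  note u_small = impact_invariant_bounds(2)[OF assms(1,2,4,5) x inv]
  define v where "v = \<phi> * (1 + s / S) ^ (1 + \<zeta>) * u"
  have "\<bar>v\<bar> = \<bar>\<phi> * (1 + s / S) ^ (1 + \<zeta>)\<bar> * \<bar>u\<bar>"
    unfolding v_def by (rule abs_mult)
  also have "\<dots> \<le> \<bar>\<phi>\<bar> * (1 + \<delta>) ^ (1 + \<zeta>) * \<bar>u\<bar>"
  proof (rule mult_right_mono)
    show "\<bar>\<phi> * (1 + s / S) ^ (1 + \<zeta>)\<bar> \<le> \<bar>\<phi>\<bar> * (1 + \<delta>) ^ (1 + \<zeta>)"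
      using assms(1,3) s_small by (intro abs_impact_factor_le) auto
  qed simp
  also have "\<dots> \<le> q * \<bar>u\<bar>"
    by (rule mult_right_mono[OF q]) simp
  finally have v: "\<bar>v\<bar> \<le> q * \<bar>u\<bar>" .
  have "\<delta> * S \<le> 1/2 * S"
    using assms(1,3) by (intro mult_right_mono) auto
  then have "- s - S < v"
    using abs_ge_minus_self[of v] abs_ge_minus_self[of s] v s_small u_small by linarith
  then have floor_inactive: "max v (- s - S) = v"
    by simp
  have "(1 - q) * \<bar>s + v\<bar> \<le> (1 - q) * (\<bar>s\<bar> + \<bar>v\<bar>)"
    using assms(5) by (intro mult_left_mono abs_triangle_ineq) simp
  moreover have "(1 - q) * (\<bar>s\<bar> + \<bar>v\<bar>) + q * \<bar>v\<bar> = (1 - q) * \<bar>s\<bar> + \<bar>v\<bar>"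
    by (simp add: algebra_simps)
  ultimately show ?thesis
    unfolding v_def[symmetric] floor_inactive using v inv by linarith
qed

lemma impact_invariant:
  fixes S \<delta> q \<phi> x :: real
  assumes "S > 0" "0 < \<delta>" "\<delta> \<le> 1/2" "0 \<le> q" "q < 1"
    and "\<bar>\<phi>\<bar> * (1 + \<delta>) ^ (1 + \<zeta>) \<le> q"
    and x: "\<bar>x\<bar> < \<delta> * S * (1 - q)"
  shows "(1 - q) * \<bar>mis_s S \<zeta> \<phi> x n\<bar> + q * \<bar>mis_u S \<zeta> \<phi> x n\<bar> \<le> \<bar>x\<bar>"
proof (induction n)
  case 0
  have "\<delta> * S * (1 - q) \<le> \<delta> * S" "\<delta> * S \<le> S"
    using assms(1-5) by (auto intro: mult_left_le)
  then have "max x (-S) = x"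
    using x by auto
  then show ?case
    by (simp add: mis_s_0 mis_u_def algebra_simps)
next
  case (Suc n)
  then show ?case
    unfolding mis_s_Suc mis_u_Suc by (rule impact_step_invariant[OF assms])
qed

lemma regular_scenario_if_small:
  fixes S \<delta> q \<phi> x :: real
  assumes "S > 0" "0 < \<delta>" "\<delta> \<le> 1/2" "0 \<le> q" "q < 1"
    and "\<bar>\<phi>\<bar> * (1 + \<delta>) ^ (1 + \<zeta>) \<le> q"
    and x: "\<bar>x\<bar> < \<delta> * S * (1 - q)"
  shows "regular_scenario S \<zeta> \<phi> x"
proof -
  have "mis_s S \<zeta> \<phi> x n \<noteq> - S" for n
  proof -
    have "\<bar>mis_s S \<zeta> \<phi> x n\<bar> < \<delta> * S"
      using impact_invariant_bounds(1)[OF assms(1,2,4,5) x impact_invariant[OF assms]] .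
    moreover have "\<delta> * S < S"
      using assms(1-3) by simp
    ultimately show ?thesis
      by auto
  qed
  then show ?thesis
    unfolding regular_scenario_def by simp
qed

lemma regular_scenario_near_zero:
  fixes S \<delta> \<phi> :: real
  assumes "S > 0" "0 < \<delta>" "\<delta> \<le> 1/2" and contraction: "\<bar>\<phi>\<bar> * (1 + \<delta>) ^ (1 + \<zeta>) < 1"
  shows "\<exists>R > 0. \<forall>x. -R < x \<and> x < R \<longrightarrow> regular_scenario S \<zeta> \<phi> x"
proof -
  define q where "q = \<bar>\<phi>\<bar> * (1 + \<delta>) ^ (1 + \<zeta>)"
  have q: "0 \<le> q" "q < 1"
    using assms(2) contraction by (simp_all add: q_def)
  show ?thesis
  proof (intro exI[of _ "\<delta> * S * (1 - q)"] conjI allI impI)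
    show "0 < \<delta> * S * (1 - q)"
      using assms(1,2) q by simp
    fix x
    assume "- (\<delta> * S * (1 - q)) < x \<and> x < \<delta> * S * (1 - q)"
    then have "\<bar>x\<bar> < \<delta> * S * (1 - q)"
      by (simp add: abs_less_iff)
    then show "regular_scenario S \<zeta> \<phi> x"
      by (rule regular_scenario_if_small[OF assms(1-3) q eq_refl[OF q_def[symmetric]]])
  qed
qed

lemma small_margin_contraction:
  fixes \<phi> :: real
  assumes "\<bar>\<phi>\<bar> < 1"
  obtains \<delta> where "0 < \<delta>" "\<delta> \<le> 1/2" "\<bar>\<phi>\<bar> * (1 + \<delta>) ^ 2 < 1"
proof
  define \<delta> where "\<delta> = (1 - \<bar>\<phi>\<bar>) / 8"
  show \<delta>: "0 < \<delta>" "\<delta> \<le> 1/2"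
    using assms by (auto simp: \<delta>_def)
  have "(1 + \<delta>) ^ 2 \<le> 1 + 3 * \<delta>"
    using \<delta> by (simp add: power2_eq_square algebra_simps)
  then have "\<bar>\<phi>\<bar> * (1 + \<delta>) ^ 2 \<le> \<bar>\<phi>\<bar> * (1 + 3 * \<delta>)"
    by (simp add: mult_left_mono)
  also have "\<dots> \<le> \<bar>\<phi>\<bar> + 3 * \<delta>"
    using mult_left_le_one_le[of "3 * \<delta>" "\<bar>\<phi>\<bar>"] assms \<delta> by (simp add: distrib_left)
  also have "\<dots> < 1"
    using assms by (simp add: \<delta>_def field_simps)
  finally show "\<bar>\<phi>\<bar> * (1 + \<delta>) ^ 2 < 1" .
qed

theorem proposition4p3:
  fixes S \<phi> :: real and \<zeta> :: nat
  assumes "S > 0" and "\<zeta> \<in> {0, 1}" and "-1 < \<phi>" and "\<phi> < 1"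
  shows "\<exists>R > 0. \<forall>x. -R < x \<and> x < R \<longrightarrow> regular_scenario S \<zeta> \<phi> x"
proof -
  have "\<bar>\<phi>\<bar> < 1"
    using assms(3,4) by (simp add: abs_less_iff)
  then obtain \<delta> where \<delta>: "0 < \<delta>" "\<delta> \<le> 1/2" and "\<bar>\<phi>\<bar> * (1 + \<delta>) ^ 2 < 1"
    by (rule small_margin_contraction)
  moreover have "(1 + \<delta>) ^ (1 + \<zeta>) \<le> (1 + \<delta>) ^ 2"
    using assms(2) \<delta> by (intro power_increasing) auto
  ultimately have "\<bar>\<phi>\<bar> * (1 + \<delta>) ^ (1 + \<zeta>) < 1"
    by (meson abs_ge_zero mult_left_mono order.strict_trans1)
  then show ?thesis
    by (rule regular_scenario_near_zero[OF assms(1) \<delta>])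
qed

end
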